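(* Let $(X,\mathbf P,\mathbf n)$ be a homogeneous hierarchical structure of degree $n\ge2$, and suppose there are constants $C_1,C_2>0$ and $\rho>1$ such that $C_1\rho^{-r}\le p_r\le C_2\rho^{-r}$ for all sufficiently large $r$. Let $\mu$ be the spectral measure of $\Delta$ and $\delta_x$ (independent of $x$). Then: (1) $\lim_{t\downarrow0}\frac{\log\mu([1-t,1])}{\log t}$ exists and equals $\frac{\log n}{\log\rho}$; i.e. the spectral dimension is $\mathrm d(n,\rho)=2\frac{\log n}{\log\rho}$. In particular $0<\mathrm d(n,\rho)\le2$ iff $n\le\rho$. (2) For $x\in X$ let $R=\sum_{k=0}^\infty\langle\delta_x,\Delta^k\delta_x\rangle\in[0,\infty]$. Then $R=\infty$ (the random walk with transition probabilities $\langle\delta_x,\Delta\delta_y\rangle$ is recurrent) if $0<\mathrm d(n,\rho)\le2$, i.e. $\rho\ge n$, and $R<\infty$ (transient) if $\mathrm d(n,\rho)>2$, i.e. $\rho<n$.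
   Context: $X$ is an infinite countable set, $\delta_x$ the Kronecker delta at $x$. A hierarchical structure $(X,\mathbf P,\mathbf n)$ consists of a sequence $\mathbf n=(n_r)_{r\ge0}$ of positive integers and partitions $\mathcal P_r$ of $X$ ("clusters of rank $r$") such that: $n_0=1$ and rank-0 clusters are singletons; for $r\ge1$ every rank-$r$ cluster is a disjoint union of exactly $n_r$ rank-$(r-1)$ clusters; any two points lie in a common cluster of some rank. It is homogeneous of degree $n$ if $n_r=n$ for all $r\ge1$. $N_r=\prod_{s=0}^rn_s$, $Q_r(x)$ is the rank-$r$ cluster containing $x$, $d(x,y)=\min\{r:y\in Q_r(x)\}$, $(E_r\psi)(x)=\frac1{N_r}\sum_{d(x,y)\le r}\psi(y)$. $(p_r)_{r\ge1}$ are positive with $\sum p_r=1$, $p_0=0$, $\lambda_r=\sum_{s\le r}p_s$, and $\Delta=\sum_{r\ge0}p_rE_r$ on $\ell^2(X)$. The spectral measure $\mu$ of $\Delta$ and $\delta_x$ is the Borel probability measure with $\langle\delta_x,f(\Delta)\delta_x\rangle=\int f\,d\mu$ for bounded Borel $f$. The spectral dimension $\mathrm d$ is defined by $\lim_{t\downarrow0}\log\mu([1-t,1])/\log t=\mathrm d/2$ when this limit exists. *)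

theory Defs
  imports "HOL-Probability.Probability"
begin

text \<open>Hierarchical structure on a countably infinite set X: P r is the partition of X
  into clusters of rank r, nn r is the number of rank-(r-1) clusters in a rank-r cluster.\<close>

definition hier_struct :: "'a set \<Rightarrow> (nat \<Rightarrow> 'a set set) \<Rightarrow> (nat \<Rightarrow> nat) \<Rightarrow> bool" where
  "hier_struct X P nn \<longleftrightarrow>
     countable X \<and> infinite X \<and>
     (\<forall>r. nn r > 0) \<and> nn 0 = 1 \<and>
     (\<forall>r. partition_on X (P r)) \<and>
     P 0 = {{x} | x. x \<in> X} \<and>
     (\<forall>r. \<forall>C \<in> P (Suc r). \<exists>S. S \<subseteq> P r \<and> finite S \<and> card S = nn (Suc r) \<and> C = \<Union>S) \<and>
     (\<forall>x\<in>X. \<forall>y\<in>X. \<exists>r. \<exists>C\<in>P r. x \<in> C \<and> y \<in> C)"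

definition homogeneous :: "(nat \<Rightarrow> nat) \<Rightarrow> nat \<Rightarrow> bool" where
  "homogeneous nn n \<longleftrightarrow> (\<forall>r\<ge>1. nn r = n)"

definition NN :: "(nat \<Rightarrow> nat) \<Rightarrow> nat \<Rightarrow> nat" where
  "NN nn r = (\<Prod>s\<le>r. nn s)"

definition clusterQ :: "(nat \<Rightarrow> 'a set set) \<Rightarrow> nat \<Rightarrow> 'a \<Rightarrow> 'a set" where
  "clusterQ P r x = (THE C. C \<in> P r \<and> x \<in> C)"

definition hdist :: "(nat \<Rightarrow> 'a set set) \<Rightarrow> 'a \<Rightarrow> 'a \<Rightarrow> nat" where
  "hdist P x y = (LEAST r. y \<in> clusterQ P r x)"

definition Eop :: "'a set \<Rightarrow> (nat \<Rightarrow> 'a set set) \<Rightarrow> (nat \<Rightarrow> nat) \<Rightarrow> nat \<Rightarrow> ('a \<Rightarrow> real) \<Rightarrow> 'a \<Rightarrow> real" where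
  "Eop X P nn r \<psi> x = (1 / real (NN nn r)) * (\<Sum>y\<in>{y\<in>X. hdist P x y \<le> r}. \<psi> y)"

definition Delta :: "'a set \<Rightarrow> (nat \<Rightarrow> 'a set set) \<Rightarrow> (nat \<Rightarrow> nat) \<Rightarrow> (nat \<Rightarrow> real) \<Rightarrow> ('a \<Rightarrow> real) \<Rightarrow> 'a \<Rightarrow> real" where
  "Delta X P nn p \<psi> x = (\<Sum>r. p r * Eop X P nn r \<psi> x)"

definition kdelta :: "'a \<Rightarrow> 'a \<Rightarrow> real" where
  "kdelta x = (\<lambda>y. if y = x then 1 else 0)"

definition spectral_measure_at ::
  "'a set \<Rightarrow> (nat \<Rightarrow> 'a set set) \<Rightarrow> (nat \<Rightarrow> nat) \<Rightarrow> (nat \<Rightarrow> real) \<Rightarrow> 'a \<Rightarrow> real measure \<Rightarrow> bool" where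
  "spectral_measure_at X P nn p x \<mu> \<longleftrightarrow>
     sets \<mu> = sets borel \<and> prob_space \<mu> \<and>
     (\<forall>k::nat. integrable \<mu> (\<lambda>t. t ^ k) \<and>
        ((Delta X P nn p ^^ k) (kdelta x)) x = (\<integral>t. t ^ k \<partial>\<mu>))"

end

theory Submission
  imports Defs
begin

text \<open>
  The mean of \<open>E\<^sub>t \<psi>\<close> over the rank-\<open>s\<close> cluster of \<open>x\<close> is the mean of \<open>\<psi>\<close> over its rank-\<open>max s t\<close>
  cluster. Starting from the mean \<open>n ^ -s\<close> of \<open>\<delta>\<^sub>x\<close> over the rank-\<open>s\<close> cluster, induction on \<open>k\<close> gives
  \<open>\<langle>\<delta>\<^sub>x, \<Delta>^k \<delta>\<^sub>x\<rangle> = \<Sum>r. w\<^sub>r \<lambda>\<^sub>r ^ k\<close> with \<open>w\<^sub>r = n ^ -r (1 - 1/n)\<close>. These moments are bounded, so they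
  determine \<open>\<mu>\<close>: it is the law of \<open>\<lambda>\<^sub>R\<close> for a geometrically distributed rank \<open>R\<close>, and
  \<open>\<mu>([1 - t, 1]) = n ^ -R(t)\<close> where \<open>R(t)\<close> is the first rank with \<open>1 - \<lambda>\<^sub>r \<le> t\<close>. Since \<open>1 - \<lambda>\<^sub>r\<close> is
  comparable to \<open>\<rho> ^ -r\<close>, \<open>-log t = R(t) log \<rho> + O(1)\<close>, which gives the limit. Summing the geometric
  series in \<open>k\<close>, the Green function is \<open>\<Sum>r. w\<^sub>r / (1 - \<lambda>\<^sub>r)\<close>, whose terms are comparable to
  \<open>(\<rho> / n) ^ r\<close>.
\<close>

section \<open>Clusters of a hierarchical structure\<close>

locale hierarchy =
  fixes X :: "'a set" and P :: "nat \<Rightarrow> 'a set set" and nn :: "nat \<Rightarrow> nat"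
  assumes hier: "hier_struct X P nn"
begin

abbreviation Q :: "nat \<Rightarrow> 'a \<Rightarrow> 'a set" where "Q r y \<equiv> clusterQ P r y"

lemma nn_pos: "nn r > 0"
  using hier unfolding hier_struct_def by simp

lemma nn_0: "nn 0 = 1"
  using hier unfolding hier_struct_def by simp

lemma partition_P: "partition_on X (P r)"
  using hier unfolding hier_struct_def by simp

lemma P_0: "P 0 = {{y} | y. y \<in> X}"
  using hier unfolding hier_struct_def by simp

lemma P_Suc_split: "C \<in> P (Suc r) \<Longrightarrow> \<exists>S \<subseteq> P r. finite S \<and> card S = nn (Suc r) \<and> C = \<Union>S"
  using hier unfolding hier_struct_def by (elim conjE allE ballE) auto

lemma P_connected: "y \<in> X \<Longrightarrow> z \<in> X \<Longrightarrow> \<exists>r. \<exists>C\<in>P r. y \<in> C \<and> z \<in> C"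
  using hier unfolding hier_struct_def by (elim conjE ballE) auto

lemma P_subset: "C \<in> P r \<Longrightarrow> C \<subseteq> X"
  using partition_onD1[OF partition_P, of r] by auto

lemma ex_P_mem: "y \<in> X \<Longrightarrow> \<exists>C\<in>P r. y \<in> C"
  using partition_onD1[OF partition_P, of r] by auto

lemma clusterQ_eqI:
  assumes "C \<in> P r" "y \<in> C"
  shows "Q r y = C"
proof -
  have unique: "D = C" if "D \<in> P r" "y \<in> D" for D
    using disjointD[OF partition_onD2[OF partition_P] that(1) assms(1)] that(2) assms(2) by blast
  show ?thesis
    unfolding clusterQ_def by (rule the_equality) (use assms unique in blast)+
qed

lemma clusterQ_in_P: "y \<in> X \<Longrightarrow> Q r y \<in> P r"
  and mem_clusterQ: "y \<in> X \<Longrightarrow> y \<in> Q r y"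
proof -
  assume "y \<in> X"
  then obtain C where C: "C \<in> P r" "y \<in> C"
    using ex_P_mem by blast
  then show "Q r y \<in> P r" "y \<in> Q r y"
    unfolding clusterQ_eqI[OF C] .
qed

lemma clusterQ_subset: "y \<in> X \<Longrightarrow> Q r y \<subseteq> X"
  by (rule P_subset[OF clusterQ_in_P])

lemma clusterQ_eq_of_mem: "y \<in> X \<Longrightarrow> z \<in> Q r y \<Longrightarrow> Q r z = Q r y"
  by (rule clusterQ_eqI[OF clusterQ_in_P])

lemma mem_clusterQ_commute: "y \<in> X \<Longrightarrow> z \<in> X \<Longrightarrow> z \<in> Q r y \<longleftrightarrow> y \<in> Q r z"
  using clusterQ_eq_of_mem[of y z r] clusterQ_eq_of_mem[of z y r] mem_clusterQ[of y r] mem_clusterQ[of z r]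
  by blast

lemma clusterQ_0:
  assumes "y \<in> X"
  shows "Q 0 y = {y}"
proof -
  have "{y} \<in> P 0"
    using P_0 assms by blast
  then show ?thesis
    by (simp add: clusterQ_eqI)
qed

lemma clusterQ_subset_Suc:
  assumes y: "y \<in> X"
  shows "Q r y \<subseteq> Q (Suc r) y"
proof -
  obtain S where S: "S \<subseteq> P r" "finite S" "card S = nn (Suc r)" "Q (Suc r) y = \<Union>S"
    using P_Suc_split[OF clusterQ_in_P[OF y]] by blast
  then obtain D where D: "D \<in> S" "y \<in> D"
    using mem_clusterQ[OF y, of "Suc r"] by auto
  then have "Q r y = D"
    using S(1) by (intro clusterQ_eqI) auto
  then show ?thesis
    using S(4) D(1) by auto
qed

lemma clusterQ_mono: "y \<in> X \<Longrightarrow> r \<le> s \<Longrightarrow> Q r y \<subseteq> Q s y"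
  by (rule lift_Suc_mono_le[of "\<lambda>r. Q r y", OF clusterQ_subset_Suc])

lemma NN_Suc: "NN nn (Suc r) = nn (Suc r) * NN nn r"
  by (simp add: NN_def)

lemma NN_pos: "NN nn r > 0"
  using nn_pos by (simp add: NN_def prod_pos)

lemma card_clusterQ: "y \<in> X \<Longrightarrow> card (Q r y) = NN nn r"
proof (induction r arbitrary: y)
  case 0
  then show ?case using clusterQ_0 nn_0 by (simp add: NN_def)
next
  case (Suc r)
  obtain S where S: "S \<subseteq> P r" "finite S" "card S = nn (Suc r)" "Q (Suc r) y = \<Union>S"
    using P_Suc_split[OF clusterQ_in_P[OF Suc.prems]] by blast
  have card_D: "card D = NN nn r" if D: "D \<in> S" for D
  proof -
    obtain z where "z \<in> D"
      using partition_onD3[OF partition_P, of r] S(1) D by (metis equals0I subsetD)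
    then have "z \<in> X" "Q r z = D"
      using P_subset S(1) D clusterQ_eqI by blast+
    then show ?thesis using Suc.IH by blast
  qed
  have "finite D" if "D \<in> S" for D
    using card_D[OF that] NN_pos card_ge_0_finite by metis
  moreover have "pairwise disjnt S"
    using partition_onD2[OF partition_P, of r] S(1) pairwise_subset by blast
  ultimately have "card (\<Union>S) = sum card S"
    by (rule card_Union_disjoint[rotated])
  also have "\<dots> = card S * NN nn r"
    using card_D by simp
  finally show ?case
    using S(3,4) NN_Suc by simp
qed

lemma finite_clusterQ: "y \<in> X \<Longrightarrow> finite (Q r y)"
  using card_clusterQ[of y r] NN_pos[of r] by (intro card_ge_0_finite) simp

lemma ex_mem_clusterQ:
  assumes "y \<in> X" "z \<in> X"
  shows "\<exists>r. z \<in> Q r y"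
proof -
  obtain r C where "C \<in> P r" "y \<in> C" "z \<in> C"
    using P_connected[OF assms] by blast
  then show ?thesis
    using clusterQ_eqI by blast
qed

lemma hdist_ball_eq_clusterQ:
  assumes y: "y \<in> X"
  shows "{z \<in> X. hdist P y z \<le> r} = Q r y"
proof (intro set_eqI iffI)
  fix z assume z: "z \<in> {z \<in> X. hdist P y z \<le> r}"
  then have "\<exists>r. z \<in> Q r y"
    using ex_mem_clusterQ[OF y] by blast
  then have "z \<in> Q (hdist P y z) y"
    unfolding hdist_def by (rule LeastI_ex)
  then show "z \<in> Q r y" using clusterQ_mono[OF y] z by blast
next
  fix z assume "z \<in> Q r y"
  then show "z \<in> {z \<in> X. hdist P y z \<le> r}"
    using clusterQ_subset[OF y] unfolding hdist_def by (auto intro: Least_le)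
qed

section \<open>Cluster means\<close>

definition cluster_mean :: "nat \<Rightarrow> 'a \<Rightarrow> ('a \<Rightarrow> real) \<Rightarrow> real" where
  "cluster_mean r y \<psi> = (\<Sum>z\<in>Q r y. \<psi> z) / NN nn r"

lemma Eop_eq_cluster_mean: "y \<in> X \<Longrightarrow> Eop X P nn r \<psi> y = cluster_mean r y \<psi>"
  by (simp add: Eop_def cluster_mean_def hdist_ball_eq_clusterQ)

lemma cluster_mean_0: "y \<in> X \<Longrightarrow> cluster_mean 0 y \<psi> = \<psi> y"
  using nn_0 by (simp add: cluster_mean_def clusterQ_0 NN_def)

lemma cluster_mean_const:
  assumes "y \<in> X" "\<And>z. z \<in> Q r y \<Longrightarrow> \<psi> z = c"
  shows "cluster_mean r y \<psi> = c"
  using assms card_clusterQ[of y r] NN_pos[of r] by (simp add: cluster_mean_def)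

lemma abs_cluster_mean_le:
  assumes y: "y \<in> X" and bound: "\<And>z. z \<in> X \<Longrightarrow> \<bar>\<psi> z\<bar> \<le> 1"
  shows "\<bar>cluster_mean r y \<psi>\<bar> \<le> 1"
proof -
  have "\<bar>\<Sum>z\<in>Q r y. \<psi> z\<bar> \<le> (\<Sum>z\<in>Q r y. 1)"
    using bound clusterQ_subset[OF y] by (intro sum_abs[THEN order_trans] sum_mono) auto
  then show ?thesis
    using card_clusterQ[OF y, of r] NN_pos[of r] by (simp add: cluster_mean_def abs_divide)
qed

lemma cluster_mean_Eop_of_le:
  assumes y: "y \<in> X" and "t \<le> s"
  shows "cluster_mean s y (Eop X P nn t \<psi>) = cluster_mean s y \<psi>"
proof -
  have fin: "finite (Q s y)"
    using finite_clusterQ[OF y] .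
  have zX: "z \<in> X" if "z \<in> Q s y" for z
    using clusterQ_subset[OF y] that by blast
  have inner: "Q t z = {w \<in> Q s y. w \<in> Q t z}" if "z \<in> Q s y" for z
    using clusterQ_mono[OF zX[OF that] \<open>t \<le> s\<close>] clusterQ_eq_of_mem[OF y that] by blast
  \<comment> \<open>Double counting: \<open>w\<close> lies in \<open>Q t z\<close> for exactly the \<open>NN nn t\<close> points \<open>z\<close> of \<open>Q t w\<close>.\<close>
  have count: "card {z \<in> Q s y. w \<in> Q t z} = NN nn t" if "w \<in> Q s y" for w
  proof -
    have "{z \<in> Q s y. w \<in> Q t z} = Q t w"
      using mem_clusterQ_commute[OF zX[OF that]] zX clusterQ_mono[OF zX[OF that] \<open>t \<le> s\<close>]
        clusterQ_eq_of_mem[OF y that] by blast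
    then show ?thesis
      using card_clusterQ[OF zX[OF that]] by simp
  qed
  have "(\<Sum>z\<in>Q s y. \<Sum>w\<in>Q t z. \<psi> w) = (\<Sum>z\<in>Q s y. \<Sum>w\<in>Q s y. if w \<in> Q t z then \<psi> w else 0)"
  proof (rule sum.cong[OF refl])
    fix z assume z: "z \<in> Q s y"
    have "(\<Sum>w\<in>Q t z. \<psi> w) = (\<Sum>w\<in>{w \<in> Q s y. w \<in> Q t z}. \<psi> w)"
      by (rule arg_cong[OF inner[OF z]])
    also have "\<dots> = (\<Sum>w\<in>Q s y. if w \<in> Q t z then \<psi> w else 0)"
      using fin by (simp add: sum.inter_filter)
    finally show "(\<Sum>w\<in>Q t z. \<psi> w) = (\<Sum>w\<in>Q s y. if w \<in> Q t z then \<psi> w else 0)" .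
  qed
  also have "\<dots> = (\<Sum>w\<in>Q s y. \<Sum>z\<in>Q s y. if w \<in> Q t z then \<psi> w else 0)"
    by (rule sum.swap)
  also have "\<dots> = (\<Sum>w\<in>Q s y. \<psi> w * NN nn t)"
    using fin count by (intro sum.cong refl) (simp add: sum.inter_filter[symmetric])
  finally have "(\<Sum>z\<in>Q s y. Eop X P nn t \<psi> z) = (\<Sum>w\<in>Q s y. \<psi> w)"
    using NN_pos[of t] zX
    by (simp add: Eop_eq_cluster_mean cluster_mean_def sum_divide_distrib[symmetric] sum_distrib_right[symmetric])
  then show ?thesis
    by (simp add: cluster_mean_def)
qed

lemma cluster_mean_Eop:
  assumes y: "y \<in> X"
  shows "cluster_mean s y (Eop X P nn t \<psi>) = cluster_mean (max s t) y \<psi>"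
proof (cases "t \<le> s")
  case True
  then show ?thesis
    using cluster_mean_Eop_of_le[OF y] by (simp add: max_def)
next
  case False
  have "Eop X P nn t \<psi> z = cluster_mean t y \<psi>" if "z \<in> Q s y" for z
  proof -
    have z: "z \<in> Q t y"
      using clusterQ_mono[OF y, of s t] False that by auto
    then have "z \<in> X"
      using clusterQ_subset[OF y] by blast
    then show ?thesis
      by (simp add: Eop_eq_cluster_mean cluster_mean_def clusterQ_eq_of_mem[OF y z])
  qed
  then show ?thesis
    using False by (simp add: cluster_mean_const[OF y] max_def)
qed

end

locale hierarchy_walk = hierarchy +
  fixes p :: "nat \<Rightarrow> real"
  assumes p_nonneg: "\<And>r. p r \<ge> 0" and p_sums: "p sums 1"
begin

abbreviation Delta_op :: "('a \<Rightarrow> real) \<Rightarrow> 'a \<Rightarrow> real" where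
  "Delta_op \<equiv> Delta X P nn p"

lemma summable_p: "summable p"
  using p_sums by (rule sums_summable)

lemma suminf_p: "suminf p = 1"
  using p_sums by (rule sums_unique[symmetric])

lemma summable_p_mult_bounded:
  assumes "\<And>r. \<bar>f r\<bar> \<le> 1"
  shows "summable (\<lambda>r. p r * f r)"
  by (rule summable_comparison_test[OF _ summable_p])
    (use assms p_nonneg in \<open>auto simp: abs_mult intro!: mult_left_le\<close>)

lemma abs_Delta_le:
  assumes y: "y \<in> X" and bound: "\<And>z. z \<in> X \<Longrightarrow> \<bar>\<psi> z\<bar> \<le> 1"
  shows "\<bar>Delta_op \<psi> y\<bar> \<le> 1"
proof -
  have E: "\<bar>Eop X P nn r \<psi> y\<bar> \<le> 1" for r
    unfolding Eop_eq_cluster_mean[OF y] by (rule abs_cluster_mean_le[OF y bound])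
  have term_le: "\<bar>p r * Eop X P nn r \<psi> y\<bar> \<le> p r" for r
    using E[of r] p_nonneg[of r] by (simp add: abs_mult mult_left_le)
  have summable: "summable (\<lambda>r. \<bar>p r * Eop X P nn r \<psi> y\<bar>)"
    by (rule summable_comparison_test[OF _ summable_p]) (use term_le in auto)
  have "\<bar>Delta_op \<psi> y\<bar> \<le> (\<Sum>r. \<bar>p r * Eop X P nn r \<psi> y\<bar>)"
    unfolding Delta_def by (rule summable_rabs[OF summable])
  also have "\<dots> \<le> suminf p"
    by (rule suminf_le[OF term_le summable summable_p])
  finally show ?thesis
    by (simp add: suminf_p)
qed

lemma abs_Delta_pow_kdelta_le: "z \<in> X \<Longrightarrow> \<bar>(Delta_op ^^ k) (kdelta y) z\<bar> \<le> 1"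
  by (induction k arbitrary: z) (auto simp: kdelta_def intro!: abs_Delta_le)

lemma cluster_mean_Delta:
  assumes y: "y \<in> X" and bound: "\<And>z. z \<in> X \<Longrightarrow> \<bar>\<psi> z\<bar> \<le> 1"
  shows "cluster_mean s y (Delta_op \<psi>) = (\<Sum>t. p t * cluster_mean (max s t) y \<psi>)"
proof -
  have zX: "z \<in> X" if "z \<in> Q s y" for z
    using clusterQ_subset[OF y] that by blast
  have summable: "summable (\<lambda>t. p t * Eop X P nn t \<psi> z)" if "z \<in> Q s y" for z
    using abs_cluster_mean_le[OF zX[OF that] bound]
    by (intro summable_p_mult_bounded) (simp add: Eop_eq_cluster_mean[OF zX[OF that]])
  have "(\<Sum>z\<in>Q s y. Delta_op \<psi> z) = (\<Sum>t. \<Sum>z\<in>Q s y. p t * Eop X P nn t \<psi> z)"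
    unfolding Delta_def using summable by (rule suminf_sum[symmetric])
  also have "\<dots> = (\<Sum>t. p t * cluster_mean (max s t) y \<psi> * NN nn s)"
  proof -
    have "(\<Sum>z\<in>Q s y. Eop X P nn t \<psi> z) = cluster_mean (max s t) y \<psi> * NN nn s" for t
      using cluster_mean_Eop[OF y, of s t \<psi>] NN_pos[of s] by (simp add: cluster_mean_def[of s] field_simps)
    then show ?thesis
      by (simp add: sum_distrib_left[symmetric] mult.assoc)
  qed
  also have "\<dots> = (\<Sum>t. p t * cluster_mean (max s t) y \<psi>) * NN nn s"
    using abs_cluster_mean_le[OF y bound]
    by (intro suminf_mult2[symmetric] summable_p_mult_bounded)
  finally show ?thesis
    using NN_pos[of s] by (simp add: cluster_mean_def)
qed

end

section \<open>Moments of \<open>\<Delta>\<close> at a point\<close>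

lemma suminf_ennreal_swap:
  fixes f :: "nat \<Rightarrow> nat \<Rightarrow> ennreal"
  shows "(\<Sum>i. \<Sum>j. f i j) = (\<Sum>j. \<Sum>i. f i j)"
proof -
  have "(\<Sum>j. \<Sum>i. f i j) = (\<integral>\<^sup>+j. (\<Sum>i. f i j) \<partial>count_space UNIV)"
    by (simp add: nn_integral_count_space_nat)
  also have "\<dots> = (\<Sum>i. \<integral>\<^sup>+j. f i j \<partial>count_space UNIV)"
    by (rule nn_integral_suminf) simp
  also have "\<dots> = (\<Sum>i. \<Sum>j. f i j)"
    by (simp add: nn_integral_count_space_nat)
  finally show ?thesis ..
qed

lemma suminf_swap_nonneg:
  fixes f :: "nat \<Rightarrow> nat \<Rightarrow> real"
  assumes nonneg: "\<And>i j. f i j \<ge> 0"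
    and rows: "\<And>i. summable (f i)" "summable (\<lambda>i. \<Sum>j. f i j)"
    and columns: "\<And>j. summable (\<lambda>i. f i j)" "summable (\<lambda>j. \<Sum>i. f i j)"
  shows "(\<Sum>i. \<Sum>j. f i j) = (\<Sum>j. \<Sum>i. f i j)"
proof -
  have "ennreal (\<Sum>i. \<Sum>j. f i j) = (\<Sum>i. \<Sum>j. ennreal (f i j))"
    using nonneg rows by (simp add: suminf_ennreal2 suminf_nonneg)
  also have "\<dots> = (\<Sum>j. \<Sum>i. ennreal (f i j))"
    by (rule suminf_ennreal_swap)
  also have "\<dots> = ennreal (\<Sum>j. \<Sum>i. f i j)"
    using nonneg columns by (simp add: suminf_ennreal2 suminf_nonneg)
  finally show ?thesis
    using nonneg rows columns by (subst (asm) ennreal_inj) (auto intro!: suminf_nonneg)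
qed

lemma sums_if_le_iff:
  fixes f :: "nat \<Rightarrow> 'a::real_normed_vector"
  shows "(\<lambda>r. if s \<le> r then f r else 0) sums l \<longleftrightarrow> (\<lambda>i. f (i + s)) sums l"
  using sums_zero_iff_shift[of s "\<lambda>r. if s \<le> r then f r else 0" l] by simp

locale homogeneous_walk = hierarchy_walk +
  fixes n :: nat
  assumes homogeneous: "homogeneous nn n" and n_ge_2: "n \<ge> 2"
begin

lemma NN_eq_power: "NN nn r = n ^ r"
proof (induction r)
  case 0
  then show ?case using nn_0 by (simp add: NN_def)
next
  case (Suc r)
  then show ?case using homogeneous by (simp add: NN_Suc homogeneous_def)
qed

definition lam :: "nat \<Rightarrow> real" where
  "lam r = (\<Sum>s\<le>r. p s)"

text \<open>\<open>weight r = 1 / NN nn r - 1 / NN nn (Suc r)\<close> is the mass of the atom \<open>lam r\<close> of the spectral measure.\<close>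

definition weight :: "nat \<Rightarrow> real" where
  "weight r = (1 / n) ^ r * (1 - 1 / n)"

definition tail_moment :: "nat \<Rightarrow> nat \<Rightarrow> real" where
  "tail_moment s k = (\<Sum>r. if s \<le> r then weight r * lam r ^ k else 0)"

lemma lam_nonneg: "lam r \<ge> 0"
  using p_nonneg by (simp add: lam_def sum_nonneg)

lemma lam_le_1: "lam r \<le> 1"
proof -
  have "lam r \<le> suminf p"
    unfolding lam_def by (rule sum_le_suminf[OF summable_p]) (use p_nonneg in auto)
  then show ?thesis
    by (simp add: suminf_p)
qed

lemma weight_nonneg: "weight r \<ge> 0"
  using n_ge_2 by (simp add: weight_def)

lemma weight_shift_sums: "(\<lambda>i. weight (i + s)) sums (1 / n) ^ s"
proof -
  have "(\<lambda>i. (1 / n) ^ s * (1 - 1 / n) * (1 / n) ^ i) sums ((1 / n) ^ s * (1 - 1 / n) * (1 / (1 - 1 / n)))"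
    using n_ge_2 by (intro sums_mult geometric_sums) auto
  then show ?thesis
    using n_ge_2 by (simp add: weight_def power_add mult_ac)
qed

lemma summable_weight: "summable weight"
  using weight_shift_sums[of 0] by (simp add: sums_iff)

lemma summable_tail_moment: "summable (\<lambda>r. if s \<le> r then weight r * lam r ^ k else 0)"
  by (rule summable_comparison_test[OF _ summable_weight])
    (use weight_nonneg lam_nonneg lam_le_1 in \<open>auto intro!: mult_left_le power_le_one simp: abs_mult\<close>)

lemma tail_moment_nonneg: "tail_moment s k \<ge> 0"
  unfolding tail_moment_def
  by (rule suminf_nonneg[OF summable_tail_moment]) (use weight_nonneg lam_nonneg in auto)

lemma tail_moment_le_1: "tail_moment s k \<le> 1"
proof -
  have "tail_moment s k \<le> suminf weight"
    unfolding tail_moment_def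
    by (rule suminf_le[OF _ summable_tail_moment summable_weight])
      (use weight_nonneg lam_nonneg lam_le_1 in \<open>auto intro!: mult_left_le power_le_one\<close>)
  also have "\<dots> = 1"
    using weight_shift_sums[of 0] by (simp add: sums_iff)
  finally show ?thesis .
qed

lemma tail_moment_0: "tail_moment s 0 = (1 / n) ^ s"
  unfolding tail_moment_def power_0 mult_1_right
  using weight_shift_sums[of s, folded sums_if_le_iff] by (simp add: sums_iff)

lemma tail_moment_Suc: "(\<Sum>t. p t * tail_moment (max s t) k) = tail_moment s (Suc k)"
proof -
  define c where "c r = weight r * lam r ^ k" for r
  define f where "f t r = (if max s t \<le> r then p t * c r else 0)" for t r
  have f_nonneg: "f t r \<ge> 0" for t r
    using weight_nonneg lam_nonneg p_nonneg by (simp add: f_def c_def)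
  have row: "(\<Sum>r. f t r) = p t * tail_moment (max s t) k" for t
    unfolding f_def tail_moment_def c_def
    by (subst suminf_mult[OF summable_tail_moment, symmetric]) (simp add: if_distrib cong: if_cong)
  \<comment> \<open>Summing over \<open>t\<close> first collects \<open>(\<Sum>t\<le>r. p t) = lam r\<close>.\<close>
  have column: "(\<Sum>t. f t r) = (if s \<le> r then weight r * lam r ^ Suc k else 0)" for r
  proof -
    have "(\<Sum>t. f t r) = (\<Sum>t\<le>r. f t r)"
      by (rule suminf_finite) (auto simp: f_def)
    then show ?thesis
      by (auto simp: f_def c_def lam_def sum_distrib_right[symmetric] mult_ac)
  qed
  have "(\<Sum>t. p t * tail_moment (max s t) k) = (\<Sum>t. \<Sum>r. f t r)"
    unfolding row ..
  also have "\<dots> = (\<Sum>r. \<Sum>t. f t r)"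
  proof (rule suminf_swap_nonneg[OF f_nonneg])
    show "summable (f t)" for t
      unfolding f_def c_def using summable_mult[OF summable_tail_moment, of "p t" "max s t" k]
      by (simp add: if_distrib cong: if_cong)
    show "summable (\<lambda>t. \<Sum>r. f t r)"
      unfolding row using tail_moment_nonneg tail_moment_le_1
      by (intro summable_p_mult_bounded) (simp add: abs_le_iff)
    show "summable (\<lambda>t. f t r)" for r
      by (rule summable_finite[of "{..r}"]) (auto simp: f_def)
    show "summable (\<lambda>r. \<Sum>t. f t r)"
      unfolding column by (rule summable_tail_moment)
  qed
  also have "\<dots> = tail_moment s (Suc k)"
    unfolding column tail_moment_def ..
  finally show ?thesis .
qed

lemma cluster_mean_Delta_pow_kdelta:
  assumes x: "x \<in> X"
  shows "cluster_mean s x ((Delta_op ^^ k) (kdelta x)) = tail_moment s k"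
proof (induction k arbitrary: s)
  case 0
  have "(\<Sum>z\<in>Q s x. kdelta x z) = 1"
    using finite_clusterQ[OF x] mem_clusterQ[OF x] by (simp add: kdelta_def)
  then show ?case
    by (simp add: cluster_mean_def tail_moment_0 NN_eq_power power_one_over)
next
  case (Suc k)
  have "cluster_mean s x ((Delta_op ^^ Suc k) (kdelta x))
      = (\<Sum>t. p t * cluster_mean (max s t) x ((Delta_op ^^ k) (kdelta x)))"
    using cluster_mean_Delta[OF x abs_Delta_pow_kdelta_le] by simp
  also have "\<dots> = tail_moment s (Suc k)"
    unfolding Suc.IH by (rule tail_moment_Suc)
  finally show ?case .
qed

lemma Delta_pow_kdelta_diag:
  assumes x: "x \<in> X"
  shows "(Delta_op ^^ k) (kdelta x) x = (\<Sum>r. weight r * lam r ^ k)"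
  using cluster_mean_Delta_pow_kdelta[OF x, of 0 k] by (simp add: cluster_mean_0[OF x] tail_moment_def)

end

section \<open>The spectral measure\<close>

lemma abs_power_le_1_plus_even_power: "\<bar>t::real\<bar> ^ k \<le> 1 + t ^ (2 * k)"
proof (cases "\<bar>t\<bar> \<le> 1")
  case True
  then have "\<bar>t\<bar> ^ k \<le> 1"
    by (simp add: power_le_one)
  moreover have "0 \<le> t ^ (2 * k)"
    by (simp add: power_mult)
  ultimately show ?thesis by linarith
next
  case False
  then have "\<bar>t\<bar> ^ k \<le> \<bar>t\<bar> ^ (2 * k)"
    by (intro power_increasing) auto
  also have "\<dots> = t ^ (2 * k)"
    by (simp add: power_even_abs)
  finally show ?thesis by linarith
qed

lemma integral_abs_power_le:
  fixes M :: "real measure"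
  assumes "prob_space M" and moments: "\<And>k. integrable M (\<lambda>t. t ^ k)"
    and even_bound: "\<And>k. (\<integral>t. t ^ (2 * k) \<partial>M) \<le> B"
  shows "(\<integral>t. \<bar>t\<bar> ^ k \<partial>M) \<le> 1 + B"
proof -
  interpret prob_space M by fact
  have "(\<integral>t. \<bar>t\<bar> ^ k \<partial>M) \<le> (\<integral>t. 1 + t ^ (2 * k) \<partial>M)"
    using integrable_abs[OF moments[of k]] moments
    by (intro integral_mono abs_power_le_1_plus_even_power) (auto simp: power_abs)
  also have "\<dots> = 1 + (\<integral>t. t ^ (2 * k) \<partial>M)"
    using moments prob_space by simp
  finally show ?thesis
    using even_bound[of k] by linarith
qed

lemma char_eq_moment_series:
  assumes M: "real_distribution M" and moments: "\<And>k. integrable M (\<lambda>t. t ^ k)"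
    and even_bound: "\<And>k. (\<integral>t. t ^ (2 * k) \<partial>M) \<le> B"
  shows "char M \<theta> = (\<Sum>k. (\<i> * of_real \<theta>) ^ k / fact k * complex_of_real (\<integral>t. t ^ k \<partial>M))"
proof -
  interpret real_distribution M by (rule M)
  define f where "f k t = (\<i> * of_real \<theta>) ^ k / fact k * complex_of_real (t ^ k)" for k t
  have exp_series: "iexp (\<theta> * t) = (\<Sum>k. f k t)" for t
  proof -
    have "(\<lambda>k. (\<i> * complex_of_real (\<theta> * t)) ^ k /\<^sub>R fact k) sums iexp (\<theta> * t)"
      by (rule exp_converges)
    moreover have "(\<lambda>k. (\<i> * complex_of_real (\<theta> * t)) ^ k /\<^sub>R fact k) = (\<lambda>k. f k t)"
      by (auto simp: f_def scaleR_conv_of_real power_mult_distrib field_simps)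
    ultimately show ?thesis
      by (simp add: sums_iff)
  qed
  have norm_f: "norm (f k t) = \<bar>\<theta>\<bar> ^ k / fact k * \<bar>t\<bar> ^ k" for k t
    by (simp add: f_def norm_mult norm_divide norm_power power_abs)
  have "char M \<theta> = (\<integral>t. (\<Sum>k. f k t) \<partial>M)"
    unfolding char_def exp_series ..
  also have "\<dots> = (\<Sum>k. integral\<^sup>L M (f k))"
  proof (rule integral_suminf)
    show "integrable M (f k)" for k
      unfolding f_def by (intro integrable_mult_right integrable_of_real moments)
    show "AE t in M. summable (\<lambda>k. norm (f k t))"
      using summable_exp[of "\<bar>\<theta>\<bar> * \<bar>t\<bar>" for t]
      by (intro AE_I2) (simp add: norm_f power_mult_distrib divide_inverse mult_ac)
    show "summable (\<lambda>k. \<integral>t. norm (f k t) \<partial>M)"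
    proof (rule summable_comparison_test[OF _ summable_mult[OF summable_exp[of "\<bar>\<theta>\<bar>"], of "1 + B"]])
      have "\<bar>\<theta>\<bar> ^ k / fact k * (\<integral>t. \<bar>t\<bar> ^ k \<partial>M) \<le> (1 + B) * (inverse (fact k) * \<bar>\<theta>\<bar> ^ k)" for k
        using mult_left_mono[OF integral_abs_power_le[OF prob_space_axioms moments even_bound, of k],
            of "\<bar>\<theta>\<bar> ^ k / fact k"]
        by (simp add: divide_inverse mult_ac)
      then show "\<exists>N. \<forall>k\<ge>N. norm (\<integral>t. norm (f k t) \<partial>M) \<le> (1 + B) * (inverse (fact k) * \<bar>\<theta>\<bar> ^ k)"
        by (simp add: norm_f)
    qed
  qed
  also have "\<dots> = (\<Sum>k. (\<i> * of_real \<theta>) ^ k / fact k * complex_of_real (\<integral>t. t ^ k \<partial>M))"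
    unfolding f_def integral_mult_right_zero integral_complex_of_real ..
  finally show ?thesis .
qed

lemma real_distribution_eq_of_moments:
  assumes M1: "real_distribution M1" and M2: "real_distribution M2"
    and integrable1: "\<And>k. integrable M1 (\<lambda>t. t ^ k)" and integrable2: "\<And>k. integrable M2 (\<lambda>t. t ^ k)"
    and even_bound: "\<And>k. (\<integral>t. t ^ (2 * k) \<partial>M1) \<le> B"
    and same_moments: "\<And>k. (\<integral>t. t ^ k \<partial>M1) = (\<integral>t. t ^ k \<partial>M2)"
  shows "M1 = M2"
proof (rule Levy_uniqueness[OF M1 M2], rule ext)
  fix \<theta>
  have even_bound2: "(\<integral>t. t ^ (2 * k) \<partial>M2) \<le> B" for k
    using even_bound[of k] same_moments[of "2 * k"] by simp
  show "char M1 \<theta> = char M2 \<theta>"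
    unfolding char_eq_moment_series[OF M1 integrable1 even_bound]
      char_eq_moment_series[OF M2 integrable2 even_bound2] same_moments ..
qed

context homogeneous_walk
begin

definition spectral_law :: "real measure" where
  "spectral_law = distr (measure_pmf (geometric_pmf (1 - 1 / n))) borel lam"

lemma measure_pmf_geometric_eq_density: "measure_pmf (geometric_pmf (1 - 1 / n)) = density (count_space UNIV) weight"
  using n_ge_2 by (simp add: measure_pmf_eq_density weight_def)

lemma real_distribution_spectral_law: "real_distribution spectral_law"
  unfolding real_distribution_def real_distribution_axioms_def spectral_law_def
  by (simp add: measure_pmf.prob_space_distr)

lemma spectral_law_integral:
  assumes g: "g \<in> borel_measurable borel" and bound: "\<And>r. \<bar>g (lam r)\<bar> \<le> 1"
  shows "integrable spectral_law g" "integral\<^sup>L spectral_law g = (\<Sum>r. weight r * g (lam r))"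
proof -
  have summable: "summable (\<lambda>r. norm (weight r *\<^sub>R g (lam r)))"
    by (rule summable_comparison_test[OF _ summable_weight])
      (use weight_nonneg bound in \<open>auto simp: abs_mult intro!: mult_left_le\<close>)
  then have "integrable (count_space UNIV) (\<lambda>r. weight r *\<^sub>R g (lam r))"
    by (simp add: integrable_count_space_nat_iff)
  then show "integrable spectral_law g" "integral\<^sup>L spectral_law g = (\<Sum>r. weight r * g (lam r))"
    unfolding spectral_law_def measure_pmf_geometric_eq_density
    using g weight_nonneg
    by (simp_all add: integrable_distr_eq integral_distr integrable_density integral_density integral_count_space_nat)
qed

lemma spectral_law_moments:
  "integrable spectral_law (\<lambda>t. t ^ k)" "(\<integral>t. t ^ k \<partial>spectral_law) = (\<Sum>r. weight r * lam r ^ k)"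
  using spectral_law_integral[of "\<lambda>t. t ^ k"] lam_nonneg lam_le_1 by (auto simp: power_le_one)

lemma spectral_measure_eq_spectral_law:
  assumes x: "x \<in> X" and \<mu>: "spectral_measure_at X P nn p x \<mu>"
  shows "\<mu> = spectral_law"
proof (rule real_distribution_eq_of_moments)
  show "real_distribution \<mu>"
    using \<mu> unfolding spectral_measure_at_def real_distribution_def real_distribution_axioms_def by blast
  show moments: "integrable \<mu> (\<lambda>t. t ^ k)" "(\<integral>t. t ^ k \<partial>\<mu>) = (\<integral>t. t ^ k \<partial>spectral_law)" for k
    using \<mu> Delta_pow_kdelta_diag[OF x] spectral_law_moments unfolding spectral_measure_at_def by metis+
  show "(\<integral>t. t ^ (2 * k) \<partial>\<mu>) \<le> 1" for k
    using tail_moment_le_1[of 0 "2 * k"] by (simp add: moments spectral_law_moments tail_moment_def)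
qed (use real_distribution_spectral_law spectral_law_moments in auto)

end

section \<open>Geometric decay of the jump probabilities\<close>

lemma geometric_sums_divide_power_Suc:
  fixes \<rho> :: real
  assumes "\<rho> > 1"
  shows "(\<lambda>i. C / \<rho> ^ Suc i) sums (C / (\<rho> - 1))"
proof -
  have "(\<lambda>i. C / \<rho> * (1 / \<rho>) ^ i) sums (C / \<rho> * (1 / (1 - 1 / \<rho>)))"
    using assms by (intro sums_mult geometric_sums) auto
  then show ?thesis
    using assms by (simp add: field_simps power_one_over)
qed

lemma tendsto_divide_of_bounded_diff:
  fixes f g :: "'a \<Rightarrow> real"
  assumes bounded: "\<forall>\<^sub>F x in F. \<bar>f x - c * g x\<bar> \<le> C" and g: "filterlim g at_top F"
  shows "((\<lambda>x. f x / g x) \<longlongrightarrow> c) F"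
proof -
  have "\<forall>\<^sub>F x in F. norm (f x / g x - c) \<le> C / g x"
    using bounded eventually_compose_filterlim[OF eventually_gt_at_top[of 0] g]
  proof eventually_elim
    case (elim x)
    then have "f x / g x - c = (f x - c * g x) / g x"
      by (simp add: field_simps)
    then show ?case
      using divide_right_mono[OF elim(1), of "g x"] elim(2) by (simp add: abs_divide)
  qed
  moreover have "((\<lambda>x. C / g x) \<longlongrightarrow> 0) F"
    by (rule tendsto_divide_0[OF tendsto_const filterlim_at_top_imp_at_infinity[OF g]])
  ultimately have "((\<lambda>x. f x / g x - c) \<longlongrightarrow> 0) F"
    by (rule Lim_null_comparison)
  then show ?thesis
    by (rule LIM_zero_cancel)
qed

locale decaying_walk = homogeneous_walk +
  fixes \<rho> :: real
  assumes p_pos: "\<And>r. r \<ge> 1 \<Longrightarrow> p r > 0" and rho_gt_1: "\<rho> > 1"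
    and decay: "\<exists>C1 C2. C1 > 0 \<and> C2 > 0 \<and>
        (\<forall>\<^sub>F r in sequentially. C1 * \<rho> powr (- real r) \<le> p r \<and> p r \<le> C2 * \<rho> powr (- real r))"
begin

definition tail :: "nat \<Rightarrow> real" where
  "tail r = 1 - lam r"

lemma tail_shift_sums: "(\<lambda>i. p (i + Suc r)) sums tail r"
  using sums_split_initial_segment[OF p_sums, of "Suc r"]
  by (simp add: tail_def lam_def lessThan_Suc_atMost)

lemma tail_pos: "tail r > 0"
proof -
  have "0 < (\<Sum>i. p (i + Suc r))"
    by (rule suminf_pos2[of _ 0]) (use tail_shift_sums p_nonneg p_pos in \<open>auto simp: sums_iff\<close>)
  then show ?thesis
    using tail_shift_sums by (simp add: sums_iff)
qed

lemma lam_less_1: "lam r < 1"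
  using tail_pos[of r] by (simp add: tail_def)

lemma tail_antimono: "r \<le> r' \<Longrightarrow> tail r' \<le> tail r"
  unfolding tail_def lam_def using p_nonneg by (auto intro!: sum_mono2)

lemma tail_tendsto_0: "tail \<longlonglongrightarrow> 0"
proof -
  have "(\<lambda>r. \<Sum>s<Suc r. p s) \<longlonglongrightarrow> 1"
    using p_sums unfolding sums_def by (rule LIMSEQ_Suc)
  then have "(\<lambda>r. 1 - lam r) \<longlonglongrightarrow> 1 - 1"
    unfolding lam_def lessThan_Suc_atMost by (intro tendsto_intros)
  then show ?thesis
    by (simp add: tail_def[abs_def])
qed

lemma p_decay_bounds: "\<exists>C1 C2 R0. C1 > 0 \<and> C2 > 0 \<and> (\<forall>r \<ge> R0. C1 / \<rho> ^ r \<le> p r \<and> p r \<le> C2 / \<rho> ^ r)"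
proof -
  obtain C1 C2 where C: "C1 > 0" "C2 > 0"
    and p_decay: "\<forall>\<^sub>F r in sequentially. C1 * \<rho> powr (- real r) \<le> p r \<and> p r \<le> C2 * \<rho> powr (- real r)"
    using decay by blast
  have "\<rho> powr (- real r) = 1 / \<rho> ^ r" for r
    using rho_gt_1 by (simp add: powr_minus powr_realpow divide_inverse)
  then have "\<forall>\<^sub>F r in sequentially. C1 / \<rho> ^ r \<le> p r \<and> p r \<le> C2 / \<rho> ^ r"
    using p_decay by simp
  then show ?thesis
    using C unfolding eventually_sequentially by blast
qed

lemma scaled_tail_bounds:
  "\<exists>K1 K2. K1 > 0 \<and> K2 > 0 \<and> (\<forall>\<^sub>F r in sequentially. K1 \<le> \<rho> ^ r * tail r \<and> \<rho> ^ r * tail r \<le> K2)"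
proof -
  obtain C1 C2 R0 where C: "C1 > 0" "C2 > 0"
    and p_bounds: "\<And>r. r \<ge> R0 \<Longrightarrow> C1 / \<rho> ^ r \<le> p r \<and> p r \<le> C2 / \<rho> ^ r"
    using p_decay_bounds by blast
  have scaled_term: "\<rho> ^ r * (C / \<rho> ^ (i + Suc r)) = C / \<rho> ^ Suc i" for C r i
    using rho_gt_1 by (simp add: power_add field_simps)
  have "C1 / (\<rho> - 1) \<le> \<rho> ^ r * tail r \<and> \<rho> ^ r * tail r \<le> C2 / (\<rho> - 1)" if "r \<ge> R0" for r
  proof
    have tail_sums: "(\<lambda>i. \<rho> ^ r * p (i + Suc r)) sums (\<rho> ^ r * tail r)"
      by (rule sums_mult[OF tail_shift_sums])
    show "C1 / (\<rho> - 1) \<le> \<rho> ^ r * tail r"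
    proof (rule sums_le[OF _ geometric_sums_divide_power_Suc[OF rho_gt_1] tail_sums])
      fix i
      have "\<rho> ^ r * (C1 / \<rho> ^ (i + Suc r)) \<le> \<rho> ^ r * p (i + Suc r)"
        using p_bounds[of "i + Suc r"] that rho_gt_1 by (intro mult_left_mono) auto
      then show "C1 / \<rho> ^ Suc i \<le> \<rho> ^ r * p (i + Suc r)"
        unfolding scaled_term .
    qed
    show "\<rho> ^ r * tail r \<le> C2 / (\<rho> - 1)"
    proof (rule sums_le[OF _ tail_sums geometric_sums_divide_power_Suc[OF rho_gt_1]])
      fix i
      have "\<rho> ^ r * p (i + Suc r) \<le> \<rho> ^ r * (C2 / \<rho> ^ (i + Suc r))"
        using p_bounds[of "i + Suc r"] that rho_gt_1 by (intro mult_left_mono) auto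
      then show "\<rho> ^ r * p (i + Suc r) \<le> C2 / \<rho> ^ Suc i"
        unfolding scaled_term .
    qed
  qed
  moreover have "C1 / (\<rho> - 1) > 0" "C2 / (\<rho> - 1) > 0"
    using C rho_gt_1 by auto
  ultimately show ?thesis
    unfolding eventually_sequentially by blast
qed

lemma Green_function_eq:
  assumes x: "x \<in> X"
  shows "(\<Sum>k. ennreal ((Delta_op ^^ k) (kdelta x) x)) = (\<Sum>r. ennreal (weight r / tail r))"
proof -
  have "(\<Sum>k. ennreal ((Delta_op ^^ k) (kdelta x) x)) = (\<Sum>k. \<Sum>r. ennreal (weight r * lam r ^ k))"
    unfolding Delta_pow_kdelta_diag[OF x] using summable_tail_moment[of 0] weight_nonneg lam_nonneg
    by (subst suminf_ennreal2) auto
  also have "\<dots> = (\<Sum>r. \<Sum>k. ennreal (weight r * lam r ^ k))"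
    by (rule suminf_ennreal_swap)
  also have "\<dots> = (\<Sum>r. ennreal (weight r / tail r))"
  proof (rule arg_cong[where f = suminf], rule ext)
    fix r
    have "(\<lambda>k. weight r * lam r ^ k) sums (weight r * (1 / (1 - lam r)))"
      using lam_nonneg lam_less_1 by (intro sums_mult geometric_sums) auto
    then show "(\<Sum>k. ennreal (weight r * lam r ^ k)) = ennreal (weight r / tail r)"
      using weight_nonneg lam_nonneg by (subst suminf_ennreal_eq) (auto simp: tail_def)
  qed
  finally show ?thesis .
qed

lemma Green_term_nonneg: "weight r / tail r \<ge> 0"
  using weight_nonneg tail_pos by (intro divide_nonneg_pos)

lemma Green_terms_bounds:
  "\<exists>c1 c2. c1 > 0 \<and> c2 > 0 \<and>
     (\<forall>\<^sub>F r in sequentially. c1 * (\<rho> / n) ^ r \<le> weight r / tail r \<and> weight r / tail r \<le> c2 * (\<rho> / n) ^ r)"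
proof -
  obtain K1 K2 where K: "K1 > 0" "K2 > 0"
    and scaled: "\<forall>\<^sub>F r in sequentially. K1 \<le> \<rho> ^ r * tail r \<and> \<rho> ^ r * tail r \<le> K2"
    using scaled_tail_bounds by blast
  define c where "c = 1 - 1 / real n"
  have c: "c > 0"
    using n_ge_2 by (simp add: c_def)
  have ratio: "weight r / tail r = c * (\<rho> / n) ^ r / (\<rho> ^ r * tail r)" for r
  proof -
    have "tail r \<noteq> 0" "\<rho> \<noteq> 0" "real n \<noteq> 0"
      using tail_pos[of r] rho_gt_1 n_ge_2 by auto
    then show ?thesis
      by (simp add: weight_def c_def power_divide power_one_over field_simps)
  qed
  show ?thesis
  proof (intro exI conjI)
    show "c / K2 > 0" "c / K1 > 0"
      using c K by auto
    show "\<forall>\<^sub>F r in sequentially. c / K2 * (\<rho> / n) ^ r \<le> weight r / tail r \<and> weight r / tail r \<le> c / K1 * (\<rho> / n) ^ r"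
      using scaled
    proof eventually_elim
      case (elim r)
      have "0 < c * (\<rho> / n) ^ r"
        using c rho_gt_1 n_ge_2 by simp
      then show ?case
        unfolding ratio using elim K by (auto simp: divide_left_mono mult_pos_pos)
    qed
  qed
qed

lemma Green_function_infinite:
  assumes x: "x \<in> X" and "\<rho> \<ge> n"
  shows "(\<Sum>k. ennreal ((Delta_op ^^ k) (kdelta x) x)) = \<infinity>"
proof (rule ccontr)
  obtain c1 c2 where c1: "c1 > 0"
    and bounds: "\<forall>\<^sub>F r in sequentially. c1 * (\<rho> / n) ^ r \<le> weight r / tail r \<and> weight r / tail r \<le> c2 * (\<rho> / n) ^ r"
    using Green_terms_bounds by blast
  assume "(\<Sum>k. ennreal ((Delta_op ^^ k) (kdelta x) x)) \<noteq> \<infinity>"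
  then have "summable (\<lambda>r. weight r / tail r)"
    unfolding Green_function_eq[OF x] using Green_term_nonneg
    by (intro summable_suminf_not_top) auto
  then have "(\<lambda>r. weight r / tail r) \<longlonglongrightarrow> 0"
    by (rule summable_LIMSEQ_zero)
  moreover have "\<forall>\<^sub>F r in sequentially. c1 \<le> weight r / tail r"
    using bounds
  proof eventually_elim
    case (elim r)
    have "1 \<le> (\<rho> / n) ^ r"
      using \<open>\<rho> \<ge> n\<close> n_ge_2 by (simp add: one_le_power)
    then have "c1 \<le> c1 * (\<rho> / n) ^ r"
      using c1 by simp
    then show ?case
      using elim by linarith
  qed
  ultimately have "c1 \<le> 0"
    by (simp add: tendsto_lowerbound)
  with c1 show False by simp
qed

lemma Green_function_finite:
  assumes x: "x \<in> X" and "\<rho> < n"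
  shows "(\<Sum>k. ennreal ((Delta_op ^^ k) (kdelta x) x)) < \<infinity>"
proof -
  obtain c1 c2 where
    bounds: "\<forall>\<^sub>F r in sequentially. c1 * (\<rho> / n) ^ r \<le> weight r / tail r \<and> weight r / tail r \<le> c2 * (\<rho> / n) ^ r"
    using Green_terms_bounds by blast
  have "summable (\<lambda>r. c2 * (\<rho> / n) ^ r)"
    using \<open>\<rho> < n\<close> rho_gt_1 by (intro summable_mult summable_geometric) auto
  then have "summable (\<lambda>r. weight r / tail r)"
  proof (rule summable_comparison_test_ev[rotated])
    show "\<forall>\<^sub>F r in sequentially. norm (weight r / tail r) \<le> c2 * (\<rho> / n) ^ r"
      using bounds by eventually_elim (metis Green_term_nonneg abs_of_nonneg real_norm_def)
  qed
  then have "(\<Sum>r. ennreal (weight r / tail r)) \<noteq> \<top>"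
    by (rule ennreal_suminf_neq_top) (rule Green_term_nonneg)
  then show ?thesis
    unfolding Green_function_eq[OF x] by (simp add: less_top)
qed

text \<open>The atoms \<open>lam r\<close> lying in \<open>[1 - t, 1]\<close> are exactly those with \<open>r \<ge> rank_at t\<close>.\<close>

definition rank_at :: "real \<Rightarrow> nat" where
  "rank_at t = (LEAST r. tail r \<le> t)"

lemma rank_at_le_iff:
  assumes t: "t > 0"
  shows "rank_at t \<le> r \<longleftrightarrow> tail r \<le> t"
proof (intro iffI)
  obtain r0 where "tail r0 \<le> t"
    using order_tendstoD(2)[OF tail_tendsto_0 t] unfolding eventually_sequentially
    by (metis le_refl less_imp_le)
  then have "tail (rank_at t) \<le> t"
    unfolding rank_at_def by (rule LeastI)
  then show "tail r \<le> t" if "rank_at t \<le> r"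
    using tail_antimono[OF that] by linarith
  show "rank_at t \<le> r" if "tail r \<le> t"
    unfolding rank_at_def using that by (rule Least_le)
qed

lemma measure_spectral_law_top_interval:
  assumes t: "t > 0"
  shows "measure spectral_law {1 - t..1} = (1 / n) ^ rank_at t"
proof -
  have "measure spectral_law {1 - t..1} = integral\<^sup>L spectral_law (indicator {1 - t..1})"
    by (simp add: spectral_law_def)
  also have "\<dots> = (\<Sum>r. weight r * indicator {1 - t..1} (lam r))"
    by (rule spectral_law_integral(2)) auto
  also have "\<dots> = (\<Sum>r. if rank_at t \<le> r then weight r else 0)"
    using rank_at_le_iff[OF t] lam_le_1
    by (intro arg_cong[where f = suminf] ext) (auto simp: tail_def indicator_def)
  also have "\<dots> = (1 / n) ^ rank_at t"
    using weight_shift_sums[of "rank_at t", folded sums_if_le_iff] by (simp add: sums_iff)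
  finally show ?thesis .
qed

lemma ln_tail_bounded: "\<exists>C. \<forall>\<^sub>F r in sequentially. \<bar>ln (tail r) + r * ln \<rho>\<bar> \<le> C"
proof -
  obtain K1 K2 where K: "K1 > 0" "K2 > 0"
    and scaled: "\<forall>\<^sub>F r in sequentially. K1 \<le> \<rho> ^ r * tail r \<and> \<rho> ^ r * tail r \<le> K2"
    using scaled_tail_bounds by blast
  have "\<forall>\<^sub>F r in sequentially. \<bar>ln (tail r) + r * ln \<rho>\<bar> \<le> \<bar>ln K1\<bar> + \<bar>ln K2\<bar>"
    using scaled
  proof eventually_elim
    case (elim r)
    have "ln (tail r) + r * ln \<rho> = ln (\<rho> ^ r * tail r)"
      using rho_gt_1 tail_pos[of r] by (simp add: ln_mult ln_realpow)
    moreover have "0 < \<rho> ^ r * tail r"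
      using elim K by linarith
    then have "ln K1 \<le> ln (\<rho> ^ r * tail r)" "ln (\<rho> ^ r * tail r) \<le> ln K2"
      using elim K by simp_all
    ultimately show ?case
      by linarith
  qed
  then show ?thesis
    by blast
qed

lemma ln_plus_rank_bounded: "\<exists>C. \<forall>\<^sub>F t in at_right 0. \<bar>ln t + rank_at t * ln \<rho>\<bar> \<le> C"
proof -
  obtain C R0 where C: "\<And>r. r \<ge> R0 \<Longrightarrow> \<bar>ln (tail r) + r * ln \<rho>\<bar> \<le> C"
    using ln_tail_bounded unfolding eventually_sequentially by blast
  have "\<forall>\<^sub>F t in at_right 0. t \<in> {0<..<tail R0}"
    using tail_pos by (intro eventually_at_right_real) simp
  then have "\<forall>\<^sub>F t in at_right 0. \<bar>ln t + rank_at t * ln \<rho>\<bar> \<le> C + ln \<rho>"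
  proof (rule eventually_mono)
    fix t assume t: "t \<in> {0<..<tail R0}"
    define R where "R = rank_at t"
    have "R0 < R"
      using rank_at_le_iff[of t R0] t by (auto simp: R_def)
    have "ln (tail R) \<le> ln t"
      using rank_at_le_iff[of t R] t tail_pos[of R] by (simp add: R_def)
    moreover have "ln t < ln (tail (R - 1))"
      using rank_at_le_iff[of t "R - 1"] \<open>R0 < R\<close> t tail_pos[of "R - 1"] by (auto simp: R_def)
    moreover have "\<bar>ln (tail R) + R * ln \<rho>\<bar> \<le> C"
      using C \<open>R0 < R\<close> by simp
    moreover have "\<bar>ln (tail (R - 1)) + (R * ln \<rho> - ln \<rho>)\<bar> \<le> C"
      using C[of "R - 1"] \<open>R0 < R\<close> by (simp add: of_nat_diff algebra_simps)
    moreover have "ln \<rho> > 0"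
      using rho_gt_1 by simp
    ultimately show "\<bar>ln t + rank_at t * ln \<rho>\<bar> \<le> C + ln \<rho>"
      unfolding R_def[symmetric] abs_le_iff by linarith
  qed
  then show ?thesis
    by blast
qed

lemma spectral_law_dimension:
  "((\<lambda>t. ln (measure spectral_law {1 - t..1}) / ln t) \<longlongrightarrow> ln n / ln \<rho>) (at_right 0)"
proof -
  obtain C where C: "\<forall>\<^sub>F t in at_right 0. \<bar>ln t + rank_at t * ln \<rho>\<bar> \<le> C"
    using ln_plus_rank_bounded by blast
  have "((\<lambda>t. rank_at t * ln n / (- ln t)) \<longlongrightarrow> ln n / ln \<rho>) (at_right 0)"
  proof (rule tendsto_divide_of_bounded_diff)
    show "\<forall>\<^sub>F t in at_right 0. \<bar>rank_at t * ln n - ln n / ln \<rho> * (- ln t)\<bar> \<le> ln n / ln \<rho> * C"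
      using C
    proof eventually_elim
      case (elim t)
      have nonneg: "0 \<le> ln n / ln \<rho>"
        using n_ge_2 rho_gt_1 by simp
      have "rank_at t * ln n - ln n / ln \<rho> * (- ln t) = ln n / ln \<rho> * (ln t + rank_at t * ln \<rho>)"
        using rho_gt_1 by (simp add: field_simps)
      then have "\<bar>rank_at t * ln n - ln n / ln \<rho> * (- ln t)\<bar> = ln n / ln \<rho> * \<bar>ln t + rank_at t * ln \<rho>\<bar>"
        using nonneg by (simp only: abs_mult abs_of_nonneg)
      also have "\<dots> \<le> ln n / ln \<rho> * C"
        using elim nonneg by (rule mult_left_mono)
      finally show ?case .
    qed
    show "filterlim (\<lambda>t::real. - ln t) at_top (at_right 0)"
      by (rule filterlim_compose[OF filterlim_uminus_at_top_at_bot ln_at_0])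
  qed
  moreover have "\<forall>\<^sub>F t in at_right 0. rank_at t * ln n / (- ln t) = ln (measure spectral_law {1 - t..1}) / ln t"
    using eventually_at_right_real[OF zero_less_one]
  proof eventually_elim
    case (elim t)
    then have "ln (measure spectral_law {1 - t..1}) = - (rank_at t * ln n)"
      using n_ge_2 by (simp add: measure_spectral_law_top_interval ln_realpow ln_div)
    then show ?case
      by simp
  qed
  ultimately show ?thesis
    by (rule Lim_transform_eventually)
qed

end

lemma two_ln_div_ln_in_Ioc_iff:
  fixes a b :: real
  assumes "1 < a" "1 < b"
  shows "(0 < 2 * (ln a / ln b) \<and> 2 * (ln a / ln b) \<le> 2) \<longleftrightarrow> a \<le> b"
proof -
  have "0 < ln a" "0 < ln b"
    using assms by simp_all
  then have "(0 < 2 * (ln a / ln b) \<and> 2 * (ln a / ln b) \<le> 2) \<longleftrightarrow> ln a \<le> ln b"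
    by (simp add: pos_divide_le_eq)
  also have "\<dots> \<longleftrightarrow> a \<le> b"
    using assms by simp
  finally show ?thesis .
qed

theorem proposition3:
  fixes X :: "'a set" and P :: "nat \<Rightarrow> 'a set set" and nn :: "nat \<Rightarrow> nat"
    and n :: nat and p :: "nat \<Rightarrow> real" and \<rho> :: real
    and x :: 'a and \<mu> :: "real measure"
  assumes hs: "hier_struct X P nn"
    and hom: "homogeneous nn n" and n2: "n \<ge> 2"
    and p0: "p 0 = 0" and ppos: "\<forall>r\<ge>1. p r > 0" and psum: "p sums 1"
    and rho: "\<rho> > 1"
    and decay: "\<exists>C1 C2. C1 > 0 \<and> C2 > 0 \<and>
        (\<forall>\<^sub>F r in sequentially. C1 * \<rho> powr (- real r) \<le> p r \<and> p r \<le> C2 * \<rho> powr (- real r))"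
    and x: "x \<in> X"
    and mu: "spectral_measure_at X P nn p x \<mu>"
  shows "((\<lambda>t. ln (measure \<mu> {1 - t..1}) / ln t) \<longlongrightarrow> ln (real n) / ln \<rho>) (at_right 0)
     \<and> ((0 < 2 * (ln (real n) / ln \<rho>) \<and> 2 * (ln (real n) / ln \<rho>) \<le> 2) \<longleftrightarrow> real n \<le> \<rho>)
     \<and> (\<rho> \<ge> real n \<longrightarrow> (\<Sum>k. ennreal (((Delta X P nn p ^^ k) (kdelta x)) x)) = \<infinity>)
     \<and> (\<rho> < real n \<longrightarrow> (\<Sum>k. ennreal (((Delta X P nn p ^^ k) (kdelta x)) x)) < \<infinity>)"
proof -
  have "p r \<ge> 0" for r
    using p0 ppos by (cases r) (auto intro: less_imp_le)
  then interpret decaying_walk X P nn p n \<rho>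
    using hs hom n2 ppos psum rho decay by unfold_locales auto
  have "\<mu> = spectral_law"
    using spectral_measure_eq_spectral_law[OF x mu] .
  then show ?thesis
    using spectral_law_dimension two_ln_div_ln_in_Ioc_iff[of n \<rho>] n2 rho
      Green_function_infinite[OF x] Green_function_finite[OF x]
    by auto
qed

end
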